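(* Let $G=(V,E)$ be an undirected graph with edge capacities $u_e\in\mathbb{Z}_{\ge0}$ for all $e\in E$, sources $s_1,s_2$, sinks $t_1,t_2$, and let $k_1,k_2\in\mathbb{Z}_{\ge0}$. Let $d_1,d_2>0$ be demands with $d_1/d_2=k_1/k_2$. Then a maximal totally uniform $(k_1,k_2)$-splittable flow provides a $\tfrac12$-approximation of a maximal concurrent $(k_1,k_2)$-splittable flow for these demands: its concurrent objective value $\min_{i\in\{1,2\}}\tfrac{1}{d_i}\sum_{j=1}^{k_i}f^i_j$ is at least half the maximum of this objective over all $(k_1,k_2)$-splittable flows.
   Context: A $(k_1,k_2)$-splittable flow consists of $k_1$ $s_1$--$t_1$-paths carrying flow values $f^1_1,\dots,f^1_{k_1}\ge0$ and $k_2$ $s_2$--$t_2$-paths carrying flow values $f^2_1,\dots,f^2_{k_2}\ge0$, such that for every edge $e$ the total flow of all paths (counted with multiplicity, both commodities) containing $e$ is at most $u_e$; paths may repeat and values may be $0$ (no uniformity required). It is totally uniform if all $k_1+k_2$ paths carry the same value $x$; a maximal totally uniform flow is one maximizing $x$. A maximal concurrent $(k_1,k_2)$-splittable flow for demands $d_1,d_2$ is a $(k_1,k_2)$-splittable flow maximizing $\min_{i\in\{1,2\}}\frac{1}{d_i}\sum_{j=1}^{k_i}f^i_j$. *)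

theory Defs
  imports Main "HOL-Library.Multiset" Complex_Main
begin

definition undirected_graph :: "'v set \<Rightarrow> 'v set set \<Rightarrow> bool" where
  "undirected_graph V E \<longleftrightarrow> finite V \<and>
     (\<forall>e\<in>E. \<exists>a b. a \<noteq> b \<and> a \<in> V \<and> b \<in> V \<and> e = {a, b})"

definition is_path :: "'v set set \<Rightarrow> 'v \<Rightarrow> 'v \<Rightarrow> 'v list \<Rightarrow> bool" where
  "is_path E s t p \<longleftrightarrow> p \<noteq> [] \<and> hd p = s \<and> last p = t \<and> distinct p \<and>
     (\<forall>i. Suc i < length p \<longrightarrow> {p ! i, p ! Suc i} \<in> E)"

definition path_edges :: "'v list \<Rightarrow> 'v set set" where
  "path_edges p = {{p ! i, p ! Suc i} | i. Suc i < length p}"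

definition edge_load :: "nat \<Rightarrow> nat \<Rightarrow> (nat \<Rightarrow> 'v list) \<Rightarrow> (nat \<Rightarrow> real)
    \<Rightarrow> (nat \<Rightarrow> 'v list) \<Rightarrow> (nat \<Rightarrow> real) \<Rightarrow> 'v set \<Rightarrow> real" where
  "edge_load k1 k2 P1 f1 P2 f2 e =
     (\<Sum>j<k1. if e \<in> path_edges (P1 j) then f1 j else 0) +
     (\<Sum>j<k2. if e \<in> path_edges (P2 j) then f2 j else 0)"

definition splittable_flow ::
  "'v set set \<Rightarrow> ('v set \<Rightarrow> nat) \<Rightarrow> 'v \<Rightarrow> 'v \<Rightarrow> 'v \<Rightarrow> 'v \<Rightarrow> nat \<Rightarrow> nat
    \<Rightarrow> (nat \<Rightarrow> 'v list) \<Rightarrow> (nat \<Rightarrow> real) \<Rightarrow> (nat \<Rightarrow> 'v list) \<Rightarrow> (nat \<Rightarrow> real) \<Rightarrow> bool" where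
  "splittable_flow E u s1 t1 s2 t2 k1 k2 P1 f1 P2 f2 \<longleftrightarrow>
     (\<forall>j<k1. is_path E s1 t1 (P1 j) \<and> f1 j \<ge> 0) \<and>
     (\<forall>j<k2. is_path E s2 t2 (P2 j) \<and> f2 j \<ge> 0) \<and>
     (\<forall>e\<in>E. edge_load k1 k2 P1 f1 P2 f2 e \<le> real (u e))"

definition totally_uniform_flow ::
  "'v set set \<Rightarrow> ('v set \<Rightarrow> nat) \<Rightarrow> 'v \<Rightarrow> 'v \<Rightarrow> 'v \<Rightarrow> 'v \<Rightarrow> nat \<Rightarrow> nat
    \<Rightarrow> (nat \<Rightarrow> 'v list) \<Rightarrow> (nat \<Rightarrow> real) \<Rightarrow> (nat \<Rightarrow> 'v list) \<Rightarrow> (nat \<Rightarrow> real) \<Rightarrow> real \<Rightarrow> bool" where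
  "totally_uniform_flow E u s1 t1 s2 t2 k1 k2 P1 f1 P2 f2 x \<longleftrightarrow>
     splittable_flow E u s1 t1 s2 t2 k1 k2 P1 f1 P2 f2 \<and>
     (\<forall>j<k1. f1 j = x) \<and> (\<forall>j<k2. f2 j = x)"

definition max_totally_uniform_flow ::
  "'v set set \<Rightarrow> ('v set \<Rightarrow> nat) \<Rightarrow> 'v \<Rightarrow> 'v \<Rightarrow> 'v \<Rightarrow> 'v \<Rightarrow> nat \<Rightarrow> nat
    \<Rightarrow> (nat \<Rightarrow> 'v list) \<Rightarrow> (nat \<Rightarrow> real) \<Rightarrow> (nat \<Rightarrow> 'v list) \<Rightarrow> (nat \<Rightarrow> real) \<Rightarrow> real \<Rightarrow> bool" where
  "max_totally_uniform_flow E u s1 t1 s2 t2 k1 k2 P1 f1 P2 f2 x \<longleftrightarrow>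
     totally_uniform_flow E u s1 t1 s2 t2 k1 k2 P1 f1 P2 f2 x \<and>
     (\<forall>Q1 g1 Q2 g2 y. totally_uniform_flow E u s1 t1 s2 t2 k1 k2 Q1 g1 Q2 g2 y \<longrightarrow> y \<le> x)"

definition concurrent_value ::
  "real \<Rightarrow> real \<Rightarrow> nat \<Rightarrow> nat \<Rightarrow> (nat \<Rightarrow> real) \<Rightarrow> (nat \<Rightarrow> real) \<Rightarrow> real" where
  "concurrent_value d1 d2 k1 k2 f1 f2 = min ((\<Sum>j<k1. f1 j) / d1) ((\<Sum>j<k2. f2 j) / d2)"

end

theory Submission
  imports Defs
begin

text \<open>Let \<open>v\<close> be the concurrent value of an arbitrary splittable flow and
  \<open>y = v d\<^sub>i / (2 k\<^sub>i)\<close> (the same for both commodities since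
  \<open>d\<^sub>1 / d\<^sub>2 = k\<^sub>1 / k\<^sub>2\<close>). Commodity \<open>i\<close> ships at least \<open>2 k\<^sub>i y\<close>, so rounding
  each path value down to a multiple of \<open>y\<close> loses less than \<open>k\<^sub>i y\<close> and leaves at least
  \<open>k\<^sub>i\<close> units of \<open>y\<close>. Taking \<open>k\<^sub>i\<close> of these units (a path repeated as often as it has
  units) gives a totally uniform flow of value \<open>y\<close> which never exceeds the original edge
  loads. Hence \<open>y \<le> x\<close>, and the uniform optimum has concurrent value
  \<open>k\<^sub>i x / d\<^sub>i \<ge> v / 2\<close>.\<close>

lemma exists_selection_bounded_by_multiplicities:
  fixes c :: "nat \<Rightarrow> nat"
  assumes "n \<le> (\<Sum>j<k. c j)"
  shows "\<exists>\<sigma>. (\<forall>i<n. \<sigma> i < k) \<and>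
    (\<forall>h :: nat \<Rightarrow> 'a :: linordered_semidom. (\<forall>j. 0 \<le> h j) \<longrightarrow>
       (\<Sum>i<n. h (\<sigma> i)) \<le> (\<Sum>j<k. of_nat (c j) * h j))"
proof -
  define xs where "xs = concat (map (\<lambda>j. replicate (c j) j) [0..<k])"
  have len: "n \<le> length xs"
    using assms
    by (simp add: xs_def length_concat comp_def lessThan_atLeast0
             flip: sum_set_upt_conv_sum_list_nat)
  show ?thesis
  proof (intro exI conjI allI impI)
    show "(!) xs i < k" if "i < n" for i
      using nth_mem[of i xs] len that by (auto simp: xs_def)
  next
    fix h :: "nat \<Rightarrow> 'a" assume h: "\<forall>j. 0 \<le> h j"
    have "(\<Sum>i<n. h (xs ! i)) = sum_list (map h (take n xs))"
      using len by (simp add: sum_list_sum_nth lessThan_atLeast0 min_absorb2)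
    also have "\<dots> \<le> sum_list (map h (take n xs)) + sum_list (map h (drop n xs))"
      by (rule add_increasing2[OF _ order_refl], rule sum_list_nonneg) (use h in auto)
    also have "\<dots> = sum_list (map h xs)"
      by (metis append_take_drop_id map_append sum_list_append)
    also have "\<dots> = (\<Sum>j<k. of_nat (c j) * h j)"
    proof -
      have "sum_list (concat yss) = sum_list (map sum_list yss)" for yss :: "'a list list"
        by (induction yss) auto
      then show ?thesis
        by (simp add: xs_def map_concat sum_list_replicate comp_def lessThan_atLeast0
                 flip: sum_set_upt_conv_sum_list_nat)
    qed
    finally show "(\<Sum>i<n. h (xs ! i)) \<le> (\<Sum>j<k. of_nat (c j) * h j)" .
  qed
qed

lemma exists_uniform_selection_below_load:
  fixes g :: "nat \<Rightarrow> real" and A :: "nat \<Rightarrow> 'e set"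
  assumes y: "y > 0" and g: "\<forall>j<k. 0 \<le> g j" and total: "real (n + k) * y \<le> (\<Sum>j<k. g j)"
  shows "\<exists>\<sigma>. (\<forall>i<n. \<sigma> i < k) \<and>
    (\<forall>e. (\<Sum>i<n. if e \<in> A (\<sigma> i) then y else 0) \<le> (\<Sum>j<k. if e \<in> A j then g j else 0))"
proof -
  define c where "c j = nat \<lfloor>g j / y\<rfloor>" for j
  have c: "real (c j) = of_int \<lfloor>g j / y\<rfloor>" if "j < k" for j
    using g that y by (simp add: c_def)
  have units_below: "real (c j) * y \<le> g j" if "j < k" for j
    using c[OF that] y by (simp add: pos_le_divide_eq[symmetric])
  have "real (n + k) \<le> (\<Sum>j<k. g j / y)"
    using total y by (simp add: pos_le_divide_eq flip: sum_divide_distrib)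
  also have "\<dots> \<le> (\<Sum>j<k. real (c j) + 1)"
    using c by (intro sum_mono) simp
  also have "\<dots> = real ((\<Sum>j<k. c j) + k)"
    by (simp add: sum.distrib)
  finally have "n \<le> (\<Sum>j<k. c j)"
    by linarith
  then obtain \<sigma> where \<sigma>: "\<forall>i<n. \<sigma> i < k"
    and dominated: "\<And>h :: nat \<Rightarrow> real. \<forall>j. 0 \<le> h j \<Longrightarrow>
      (\<Sum>i<n. h (\<sigma> i)) \<le> (\<Sum>j<k. real (c j) * h j)"
    using exists_selection_bounded_by_multiplicities by blast
  have "(\<Sum>i<n. if e \<in> A (\<sigma> i) then y else 0) \<le> (\<Sum>j<k. if e \<in> A j then g j else 0)" for e
  proof -
    have "(\<Sum>i<n. if e \<in> A (\<sigma> i) then y else 0)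
          \<le> (\<Sum>j<k. real (c j) * (if e \<in> A j then y else 0))"
      using dominated[of "\<lambda>j. if e \<in> A j then y else 0"] y by simp
    also have "\<dots> \<le> (\<Sum>j<k. if e \<in> A j then g j else 0)"
      by (rule sum_mono) (use units_below g in auto)
    finally show ?thesis .
  qed
  with \<sigma> show ?thesis by blast
qed

lemma totally_uniform_flow_from_splittable:
  assumes flow: "splittable_flow E u s1 t1 s2 t2 k1 k2 Q1 g1 Q2 g2" and y: "y > 0"
    and total1: "2 * real k1 * y \<le> (\<Sum>j<k1. g1 j)"
    and total2: "2 * real k2 * y \<le> (\<Sum>j<k2. g2 j)"
  shows "\<exists>R1 R2. totally_uniform_flow E u s1 t1 s2 t2 k1 k2 R1 (\<lambda>_. y) R2 (\<lambda>_. y) y"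
proof -
  have paths1: "\<forall>j<k1. is_path E s1 t1 (Q1 j) \<and> 0 \<le> g1 j"
    and paths2: "\<forall>j<k2. is_path E s2 t2 (Q2 j) \<and> 0 \<le> g2 j"
    and capacity: "\<forall>e\<in>E. edge_load k1 k2 Q1 g1 Q2 g2 e \<le> real (u e)"
    using flow by (auto simp: splittable_flow_def)
  obtain \<sigma>1 where \<sigma>1: "\<forall>i<k1. \<sigma>1 i < k1"
    and below1: "\<forall>e. (\<Sum>i<k1. if e \<in> path_edges (Q1 (\<sigma>1 i)) then y else 0)
                    \<le> (\<Sum>j<k1. if e \<in> path_edges (Q1 j) then g1 j else 0)"
    using exists_uniform_selection_below_load[of y k1 g1 k1 "path_edges \<circ> Q1"] y paths1 total1
    by (auto simp: algebra_simps)
  obtain \<sigma>2 where \<sigma>2: "\<forall>i<k2. \<sigma>2 i < k2"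
    and below2: "\<forall>e. (\<Sum>i<k2. if e \<in> path_edges (Q2 (\<sigma>2 i)) then y else 0)
                    \<le> (\<Sum>j<k2. if e \<in> path_edges (Q2 j) then g2 j else 0)"
    using exists_uniform_selection_below_load[of y k2 g2 k2 "path_edges \<circ> Q2"] y paths2 total2
    by (auto simp: algebra_simps)
  have "edge_load k1 k2 (Q1 \<circ> \<sigma>1) (\<lambda>_. y) (Q2 \<circ> \<sigma>2) (\<lambda>_. y) e
        \<le> edge_load k1 k2 Q1 g1 Q2 g2 e" for e
    unfolding edge_load_def using below1 below2 by (simp add: add_mono)
  with capacity
  have "totally_uniform_flow E u s1 t1 s2 t2 k1 k2 (Q1 \<circ> \<sigma>1) (\<lambda>_. y) (Q2 \<circ> \<sigma>2) (\<lambda>_. y) y"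
    using y paths1 paths2 \<sigma>1 \<sigma>2
    unfolding totally_uniform_flow_def splittable_flow_def by (fastforce intro: order_trans)
  then show ?thesis by blast
qed

lemma totally_uniform_flow_half_concurrent_value:
  assumes flow: "splittable_flow E u s1 t1 s2 t2 k1 k2 Q1 g1 Q2 g2"
    and d: "d1 > 0" "d2 > 0" and r: "r > 0" "real k1 / d1 = r" "real k2 / d2 = r"
    and v: "0 < concurrent_value d1 d2 k1 k2 g1 g2"
  defines "y \<equiv> concurrent_value d1 d2 k1 k2 g1 g2 / (2 * r)"
  shows "\<exists>R1 R2. totally_uniform_flow E u s1 t1 s2 t2 k1 k2 R1 (\<lambda>_. y) R2 (\<lambda>_. y) y"
proof (rule totally_uniform_flow_from_splittable[OF flow])
  let ?v = "concurrent_value d1 d2 k1 k2 g1 g2"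
  show "y > 0"
    using v r by (simp add: y_def)
  have "?v * d1 \<le> (\<Sum>j<k1. g1 j)" "?v * d2 \<le> (\<Sum>j<k2. g2 j)"
    using d by (simp_all add: concurrent_value_def flip: pos_le_divide_eq)
  moreover have "2 * real k1 * y = ?v * d1" "2 * real k2 * y = ?v * d2"
    using d r by (auto simp: y_def field_simps)
  ultimately show "2 * real k1 * y \<le> (\<Sum>j<k1. g1 j)" "2 * real k2 * y \<le> (\<Sum>j<k2. g2 j)"
    by simp_all
qed

theorem mainTheorem8:
  fixes V :: "'v set" and E :: "'v set set" and u :: "'v set \<Rightarrow> nat"
    and s1 t1 s2 t2 :: 'v and k1 k2 :: nat and d1 d2 :: real
    and P1 P2 :: "nat \<Rightarrow> 'v list" and f1 f2 :: "nat \<Rightarrow> real" and x :: real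
  assumes "undirected_graph V E"
    and "s1 \<in> V" "t1 \<in> V" "s2 \<in> V" "t2 \<in> V"
    and "d1 > 0" "d2 > 0" "d1 / d2 = real k1 / real k2"
    and "max_totally_uniform_flow E u s1 t1 s2 t2 k1 k2 P1 f1 P2 f2 x"
  shows "\<forall>Q1 g1 Q2 g2. splittable_flow E u s1 t1 s2 t2 k1 k2 Q1 g1 Q2 g2 \<longrightarrow>
           concurrent_value d1 d2 k1 k2 f1 f2 \<ge> concurrent_value d1 d2 k1 k2 g1 g2 / 2"
proof (intro allI impI)
  fix Q1 g1 Q2 g2
  assume flow: "splittable_flow E u s1 t1 s2 t2 k1 k2 Q1 g1 Q2 g2"
  have d: "d1 > 0" "d2 > 0" "d1 / d2 = real k1 / real k2" by fact+
  then have "real k1 / real k2 > 0"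
    by (metis divide_pos_pos)
  then have "k1 > 0" "k2 > 0"
    by (auto simp: zero_less_divide_iff)
  define r where "r = real k1 / d1"
  have r: "r > 0" "real k1 / d1 = r" "real k2 / d2 = r"
    using d \<open>k1 > 0\<close> \<open>k2 > 0\<close> by (auto simp: r_def field_simps)
  have uniform: "totally_uniform_flow E u s1 t1 s2 t2 k1 k2 P1 f1 P2 f2 x"
    and optimal: "\<And>R1 h1 R2 h2 y.
      totally_uniform_flow E u s1 t1 s2 t2 k1 k2 R1 h1 R2 h2 y \<Longrightarrow> y \<le> x"
    using assms(9) unfolding max_totally_uniform_flow_def by blast+
  have "x \<ge> 0"
    using uniform \<open>k1 > 0\<close> by (auto simp: totally_uniform_flow_def splittable_flow_def)
  have value_f: "concurrent_value d1 d2 k1 k2 f1 f2 = r * x"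
    using uniform r
    by (simp add: totally_uniform_flow_def concurrent_value_def flip: times_divide_eq_left)
  define v where "v = concurrent_value d1 d2 k1 k2 g1 g2"
  show "concurrent_value d1 d2 k1 k2 f1 f2 \<ge> v / 2"
  proof (cases "v > 0")
    case True
    then have "v / (2 * r) \<le> x"
      using totally_uniform_flow_half_concurrent_value[OF flow d(1,2) r] optimal
      by (auto simp: v_def)
    with r value_f show ?thesis by (simp add: field_simps)
  next
    case False
    moreover have "0 \<le> r * x"
      using r \<open>x \<ge> 0\<close> by simp
    ultimately show ?thesis
      using value_f by simp
  qed
qed

end
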